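(* There is an absolute constant $C$ such that the following holds. Let $0<\epsilon\le1$, let $X\subset\mathbb{R}^2$ be a finite set of points in general position, and let $A\subseteq X$ be an $\epsilon$-approximation for $X$ with respect to the ranges given by wedges (intersections of two closed halfplanes), with $|A|\ge\max(3,1/\epsilon)$. Then for every point $p\in\mathbb{R}^2$ such that $X\cup\{p\}$ is in general position, $|\mathrm{SD}_X(p)-\mathrm{SD}_A(p)|\le C\sqrt{\epsilon}$.
   Context: For a finite set $Y\subset\mathbb{R}^2$ with $|Y|\ge3$ and $p\in\mathbb{R}^2$, the simplicial depth $\mathrm{SD}_Y(p)$ is the fraction, among all $\binom{|Y|}{3}$ triangles formed by convex hulls of 3-element subsets of $Y$, of those triangles that contain $p$. For a finite set $X$ and a family $\mathcal{R}$ of subsets of the plane, $A\subseteq X$ is an $\epsilon$-approximation for $X$ with respect to $\mathcal{R}$ if $\left|\frac{|A\cap R|}{|A|}-\frac{|X\cap R|}{|X|}\right|\le\epsilon$ for every $R\in\mathcal{R}$. *)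

theory Defs
  imports "HOL-Analysis.Analysis"
begin

definition general_position :: "(real^2) set \<Rightarrow> bool" where
  "general_position S \<longleftrightarrow>
     (\<forall>a\<in>S. \<forall>b\<in>S. \<forall>c\<in>S. a \<noteq> b \<and> a \<noteq> c \<and> b \<noteq> c \<longrightarrow> \<not> collinear {a, b, c})"

definition closed_halfplane :: "(real^2) set \<Rightarrow> bool" where
  "closed_halfplane H \<longleftrightarrow> (\<exists>u b. u \<noteq> 0 \<and> H = {x. u \<bullet> x \<le> b})"

definition wedges :: "(real^2) set set" where
  "wedges = {H1 \<inter> H2 | H1 H2. closed_halfplane H1 \<and> closed_halfplane H2}"

definition eps_approximation ::
    "real \<Rightarrow> (real^2) set \<Rightarrow> (real^2) set \<Rightarrow> (real^2) set set \<Rightarrow> bool" where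
  "eps_approximation \<epsilon> X A \<R> \<longleftrightarrow> A \<subseteq> X \<and>
     (\<forall>R\<in>\<R>. \<bar>real (card (A \<inter> R)) / real (card A) - real (card (X \<inter> R)) / real (card X)\<bar> \<le> \<epsilon>)"

definition simplicial_depth :: "(real^2) set \<Rightarrow> real^2 \<Rightarrow> real" where
  "simplicial_depth Y p =
     real (card {T. T \<subseteq> Y \<and> card T = 3 \<and> p \<in> convex hull T}) / real (card Y choose 3)"

end

theory Submission
  imports Defs
begin

(* Replace the count of 3-subsets in the simplicial depth by the average of the indicator of
   p \<in> conv {a, b, c} over all ordered triples (a, b, c); for an n-point set this changes the
   value by at most 3/n, since only O(n^2) triples have repeated points.
   For fixed b, c \<in> X with p, b, c not collinear, the points a with p \<in> conv {a, b, c} form the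
   wedge with apex p spanned by p - b and p - c, so replacing the first coordinate of the average
   over X by one over A costs at most \<epsilon>; degenerate b = c allows at most one such a by general
   position, which costs at most 1/|A| \<le> \<epsilon>. By symmetry any coordinate can be replaced, and
   X^3 is turned into A^3 in three steps, giving |SD_X(p) - SD_A(p)| \<le> 9 \<epsilon> \<le> 9 sqrt \<epsilon>. *)

definition triple_frequency :: "('a set \<Rightarrow> bool) \<Rightarrow> 'a set \<Rightarrow> 'a set \<Rightarrow> 'a set \<Rightarrow> real" where
  "triple_frequency Q U V W =
     (\<Sum>a\<in>U. \<Sum>b\<in>V. \<Sum>c\<in>W. of_bool (Q {a, b, c})) / (real (card U) * real (card V) * real (card W))"

lemma triple_frequency_swap12: "triple_frequency Q U V W = triple_frequency Q V U W"
  unfolding triple_frequency_def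
  by (subst sum.swap) (simp add: insert_commute mult.commute mult.left_commute)

lemma triple_frequency_swap13: "triple_frequency Q U V W = triple_frequency Q W V U"
proof -
  have "(\<Sum>a\<in>U. \<Sum>b\<in>V. \<Sum>c\<in>W. of_bool (Q {a, b, c}) :: real)
        = (\<Sum>c\<in>W. \<Sum>b\<in>V. \<Sum>a\<in>U. of_bool (Q {c, b, a}))"
    by (subst sum.swap, subst (2) sum.swap, subst sum.swap) (simp add: insert_commute)
  then show ?thesis
    unfolding triple_frequency_def by (simp add: mult.commute mult.left_commute)
qed

lemma triple_frequency_eq_mean_fraction:
  assumes "finite U"
  shows "triple_frequency Q U V W =
    (\<Sum>b\<in>V. \<Sum>c\<in>W. real (card {a\<in>U. Q {a, b, c}}) / real (card U)) / (real (card V) * real (card W))"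
proof -
  have "(\<Sum>a\<in>U. \<Sum>b\<in>V. \<Sum>c\<in>W. of_bool (Q {a, b, c}) :: real)
        = (\<Sum>b\<in>V. \<Sum>c\<in>W. \<Sum>a\<in>U. of_bool (Q {a, b, c}))"
    by (subst sum.swap, subst (2) sum.swap) simp
  also have "\<dots> = (\<Sum>b\<in>V. \<Sum>c\<in>W. real (card {a\<in>U. Q {a, b, c}}))"
    using assms by (simp add: of_bool_def sum.If_cases Int_def)
  finally show ?thesis
    unfolding triple_frequency_def by (simp add: sum_divide_distrib[symmetric] mult.assoc)
qed

lemma triple_frequency_replace_first:
  assumes "finite A" "finite X" "finite V" "V \<noteq> {}" "finite W" "W \<noteq> {}"
    and close: "\<And>b c. b \<in> V \<Longrightarrow> c \<in> W \<Longrightarrow>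
      \<bar>real (card {a\<in>A. Q {a, b, c}}) / real (card A) - real (card {a\<in>X. Q {a, b, c}}) / real (card X)\<bar> \<le> \<epsilon>"
  shows "\<bar>triple_frequency Q A V W - triple_frequency Q X V W\<bar> \<le> \<epsilon>"
proof -
  define f where "f Y b c = real (card {a\<in>Y. Q {a, b, c}}) / real (card Y)" for Y b c
  define m where "m = real (card V) * real (card W)"
  have m: "0 < m" using assms by (simp add: m_def card_gt_0_iff)
  have freq: "triple_frequency Q Y V W = (\<Sum>b\<in>V. \<Sum>c\<in>W. f Y b c) / m" if "finite Y" for Y
    using that by (simp add: triple_frequency_eq_mean_fraction f_def m_def)
  define g where "g b c = f A b c - f X b c" for b c
  have "\<bar>\<Sum>b\<in>V. \<Sum>c\<in>W. g b c\<bar> \<le> (\<Sum>b\<in>V. \<Sum>c\<in>W. \<bar>g b c\<bar>)"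
    by (rule order_trans[OF sum_abs]) (intro sum_mono sum_abs)
  moreover have "(\<Sum>b\<in>V. \<Sum>c\<in>W. \<bar>g b c\<bar>) \<le> (\<Sum>b\<in>V. \<Sum>c\<in>W. \<epsilon>)"
    by (intro sum_mono) (simp add: close f_def g_def)
  moreover have "(\<Sum>b\<in>V. \<Sum>c\<in>W. \<epsilon>) = \<epsilon> * m" by (simp add: m_def)
  ultimately have "\<bar>\<Sum>b\<in>V. \<Sum>c\<in>W. g b c\<bar> \<le> \<epsilon> * m"
    by linarith
  then have "\<bar>\<Sum>b\<in>V. \<Sum>c\<in>W. g b c\<bar> / m \<le> \<epsilon>"
    using m by (simp add: pos_divide_le_eq)
  moreover have "triple_frequency Q A V W - triple_frequency Q X V W
      = (\<Sum>b\<in>V. \<Sum>c\<in>W. g b c) / m"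
    by (simp add: freq assms(1,2) g_def sum_subtractf diff_divide_distrib)
  ultimately show ?thesis using m by (simp add: abs_divide)
qed

definition distinct_triples :: "'a set \<Rightarrow> ('a \<times> 'a \<times> 'a) set" where
  "distinct_triples Y = {(a, b, c). a \<in> Y \<and> b \<in> Y \<and> c \<in> Y \<and> a \<noteq> b \<and> a \<noteq> c \<and> b \<noteq> c}"

lemma distinct_triples_subset: "distinct_triples Y \<subseteq> Y \<times> Y \<times> Y"
  by (auto simp: distinct_triples_def)

lemma card_distinct_triples_of_card_3:
  assumes "card T = 3"
  shows "card (distinct_triples T) = 6"
proof -
  obtain x y z where T: "T = {x, y, z}" "x \<noteq> y" "y \<noteq> z" "x \<noteq> z"
    using assms card_3_iff by metis
  have "distinct_triples T = {(x,y,z), (x,z,y), (y,x,z), (y,z,x), (z,x,y), (z,y,x)}"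
  proof (intro equalityI subsetI)
    fix t assume "t \<in> distinct_triples T"
    then obtain a b c where "t = (a, b, c)" "a \<in> {x, y, z}" "b \<in> {x, y, z}" "c \<in> {x, y, z}"
      "a \<noteq> b" "a \<noteq> c" "b \<noteq> c"
      unfolding distinct_triples_def T(1) by blast
    then show "t \<in> {(x,y,z), (x,z,y), (y,x,z), (y,z,x), (z,x,y), (z,y,x)}" by auto
  qed (use T in \<open>auto simp: distinct_triples_def\<close>)
  then show ?thesis using T(2-4) by simp
qed

lemma card_non_distinct_triples:
  assumes "finite Y"
  shows "card (Y \<times> Y \<times> Y - distinct_triples Y) \<le> 3 * card Y ^ 2"
proof -
  define I1 where "I1 = (\<lambda>(a, c). (a, a, c)) ` (Y \<times> Y)"
  define I2 where "I2 = (\<lambda>(a, b). (a, b, a)) ` (Y \<times> Y)"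
  define I3 where "I3 = (\<lambda>(a, b). (a, b, b)) ` (Y \<times> Y)"
  have "Y \<times> Y \<times> Y - distinct_triples Y \<subseteq> I1 \<union> I2 \<union> I3"
  proof
    fix t assume t: "t \<in> Y \<times> Y \<times> Y - distinct_triples Y"
    then obtain a b c where abc: "t = (a, b, c)" "a \<in> Y" "b \<in> Y" "c \<in> Y"
      by auto
    with t have "a = b \<or> a = c \<or> b = c" by (auto simp: distinct_triples_def)
    then show "t \<in> I1 \<union> I2 \<union> I3"
      unfolding I1_def I2_def I3_def using abc by (elim disjE) force+
  qed
  then have "card (Y \<times> Y \<times> Y - distinct_triples Y) \<le> card (I1 \<union> I2 \<union> I3)"
    by (rule card_mono[rotated]) (simp add: I1_def I2_def I3_def assms)
  also have "\<dots> \<le> card I1 + card I2 + card I3"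
    by (meson add_le_mono card_Un_le le_trans order_refl)
  also have "\<dots> \<le> card (Y \<times> Y) + card (Y \<times> Y) + card (Y \<times> Y)"
    unfolding I1_def I2_def I3_def by (intro add_le_mono card_image_le) (auto simp: assms)
  finally show ?thesis by (simp add: card_cartesian_product power2_eq_square)
qed

lemma sum_distinct_triples:
  fixes f :: "'a set \<Rightarrow> 'b::comm_semiring_1"
  assumes "finite Y"
  shows "(\<Sum>(a, b, c)\<in>distinct_triples Y. f {a, b, c}) = 6 * (\<Sum>T | T \<subseteq> Y \<and> card T = 3. f T)"
proof -
  define S3 where "S3 = {T. T \<subseteq> Y \<and> card T = 3}"
  define h :: "'a \<times> 'a \<times> 'a \<Rightarrow> 'a set" where "h = (\<lambda>(a, b, c). {a, b, c})"
  have fin: "finite (distinct_triples Y)" "finite S3"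
    using assms by (auto simp: S3_def intro: finite_subset[OF distinct_triples_subset])
  have img: "h ` distinct_triples Y \<subseteq> S3"
    by (auto simp: h_def S3_def distinct_triples_def card_insert_if)
  have fiber: "{t \<in> distinct_triples Y. h t = T} = distinct_triples T" if "T \<in> S3" for T
  proof -
    have "{a, b, c} = T" if "a \<in> T" "b \<in> T" "c \<in> T" "a \<noteq> b" "a \<noteq> c" "b \<noteq> c" for a b c
      using \<open>T \<in> S3\<close> that card_subset_eq[of T "{a, b, c}"]
      by (auto simp: S3_def finite_subset[OF _ assms] card_insert_if)
    then show ?thesis using that by (auto simp: h_def S3_def distinct_triples_def)
  qed
  have "(\<Sum>(a, b, c)\<in>distinct_triples Y. f {a, b, c}) = (\<Sum>t\<in>distinct_triples Y. f (h t))"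
    by (simp add: h_def case_prod_beta)
  also have "\<dots> = (\<Sum>T\<in>S3. \<Sum>t | t \<in> distinct_triples Y \<and> h t = T. f (h t))"
    by (rule sum.group[OF fin img, symmetric])
  also have "\<dots> = (\<Sum>T\<in>S3. \<Sum>t | t \<in> distinct_triples Y \<and> h t = T. f T)"
    by (intro sum.cong refl) simp
  also have "\<dots> = (\<Sum>T\<in>S3. of_nat (card (distinct_triples T)) * f T)"
    by (intro sum.cong refl) (simp add: fiber)
  also have "\<dots> = 6 * (\<Sum>T\<in>S3. f T)"
    by (simp add: S3_def card_distinct_triples_of_card_3 sum_distrib_left)
  finally show ?thesis by (simp add: S3_def)
qed

lemma six_times_choose_3: "6 * real (n choose 3) = real n * (real n - 1) * (real n - 2)"
  using gbinomial_mult_fact[of 3 "real n"]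
  by (simp add: binomial_gbinomial fact_numeral numeral_3_eq_3 atLeast0_lessThan_Suc)

lemma abs_distinct_vs_all_triples_ratio_le:
  fixes n D S :: real
  assumes n: "3 \<le> n" and D: "0 \<le> D" "D \<le> n * (n - 1) * (n - 2)" and S: "D \<le> S" "S \<le> D + 3 * n\<^sup>2"
  shows "\<bar>D / (n * (n - 1) * (n - 2)) - S / n ^ 3\<bar> \<le> 3 / n"
proof -
  define M where "M = n * (n - 1) * (n - 2)"
  have gap: "n ^ 3 - M = n * (3 * n - 2)"
    by (simp add: M_def algebra_simps power3_eq_cube)
  have "0 \<le> n * (3 * n - 2)" using n by simp
  moreover have "n * (3 * n - 2) \<le> 3 * n\<^sup>2" using n by (simp add: algebra_simps power2_eq_square)
  moreover have "0 < M" using n by (simp add: M_def)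
  ultimately have M: "0 < M" "M \<le> n ^ 3" "n ^ 3 - M \<le> 3 * n\<^sup>2"
    using gap by linarith+
  have n3: "0 < n ^ 3" using n by simp
  have "3 * n\<^sup>2 / n ^ 3 = 3 / n" using n by (simp add: power2_eq_square power3_eq_cube)
  then have ratio: "x / n ^ 3 \<le> 3 / n" if "x \<le> 3 * n\<^sup>2" for x
    using that n3 divide_right_mono[of x "3 * n\<^sup>2" "n ^ 3"] by simp
  have "D / M - D / n ^ 3 = (D / M) * ((n ^ 3 - M) / n ^ 3)"
    using M(1) n3 by (simp add: field_simps)
  moreover have "(D / M) * ((n ^ 3 - M) / n ^ 3) \<le> 1 * (3 / n)"
    using D M n3 ratio[OF M(3)] by (intro mult_mono) (auto simp: M_def)
  moreover have "0 \<le> (D / M) * ((n ^ 3 - M) / n ^ 3)"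
    using D M n3 by simp
  moreover have "0 \<le> (S - D) / n ^ 3" "(S - D) / n ^ 3 \<le> 3 / n"
    using S n3 ratio by simp_all
  moreover have "D / M - S / n ^ 3 = (D / M - D / n ^ 3) - (S - D) / n ^ 3"
    by (simp add: diff_divide_distrib)
  ultimately show ?thesis unfolding M_def[symmetric] abs_le_iff by linarith
qed

lemma sum_all_triples_bounds:
  fixes Q :: "'a set \<Rightarrow> bool"
  assumes Y: "finite Y"
  defines "S \<equiv> (\<Sum>a\<in>Y. \<Sum>b\<in>Y. \<Sum>c\<in>Y. of_bool (Q {a, b, c})) :: real"
    and "N \<equiv> real (card {T. T \<subseteq> Y \<and> card T = 3 \<and> Q T})"
  shows "6 * N \<le> S" "S \<le> 6 * N + 3 * real (card Y) ^ 2"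
proof -
  define g where "g = (\<lambda>(a, b, c). of_bool (Q {a, b, c}) :: real)"
  define B where "B = (\<Sum>t\<in>Y \<times> Y \<times> Y - distinct_triples Y. g t)"
  have "(\<Sum>t\<in>distinct_triples Y. g t) = 6 * N"
    using sum_distinct_triples[OF Y, of "\<lambda>T. of_bool (Q T) :: real"] Y
    by (simp add: g_def N_def Int_def conj_assoc)
  moreover have "S = (\<Sum>t\<in>Y \<times> Y \<times> Y. g t)"
    by (simp add: S_def g_def sum.cartesian_product')
  moreover have "(\<Sum>t\<in>Y \<times> Y \<times> Y. g t) = B + (\<Sum>t\<in>distinct_triples Y. g t)"
    unfolding B_def using Y by (intro sum.subset_diff[OF distinct_triples_subset]) simp
  ultimately have S: "S = 6 * N + B" by simp
  have "B \<le> real (card (Y \<times> Y \<times> Y - distinct_triples Y)) * 1"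
    unfolding B_def by (rule sum_bounded_above) (simp add: g_def split_beta)
  also have "\<dots> \<le> real (3 * card Y ^ 2)"
    using card_non_distinct_triples[OF Y] by (simp only: of_nat_le_iff)
  finally have "B \<le> 3 * real (card Y) ^ 2" by simp
  moreover have "0 \<le> B" by (simp add: B_def g_def sum_nonneg split_beta)
  ultimately show "6 * N \<le> S" "S \<le> 6 * N + 3 * real (card Y) ^ 2"
    using S by simp_all
qed

lemma card_3_subsets_vs_triple_frequency:
  assumes Y: "finite Y" "3 \<le> card Y"
  shows "\<bar>real (card {T. T \<subseteq> Y \<and> card T = 3 \<and> Q T}) / real (card Y choose 3)
           - triple_frequency Q Y Y Y\<bar> \<le> 3 / real (card Y)"
proof -
  define n where "n = real (card Y)"
  define N where "N = real (card {T. T \<subseteq> Y \<and> card T = 3 \<and> Q T})"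
  have choose: "6 * real (card Y choose 3) = n * (n - 1) * (n - 2)"
    unfolding n_def by (rule six_times_choose_3)
  have "card {T. T \<subseteq> Y \<and> card T = 3 \<and> Q T} \<le> card {T. T \<subseteq> Y \<and> card T = 3}"
    using Y(1) by (intro card_mono) auto
  then have "6 * N \<le> n * (n - 1) * (n - 2)"
    unfolding choose[symmetric] by (simp add: N_def n_subsets[OF Y(1)])
  moreover have "real (card {T. T \<subseteq> Y \<and> card T = 3 \<and> Q T}) / real (card Y choose 3)
      = 6 * N / (n * (n - 1) * (n - 2))"
    unfolding choose[symmetric] by (simp add: N_def)
  moreover have "triple_frequency Q Y Y Y = (\<Sum>a\<in>Y. \<Sum>b\<in>Y. \<Sum>c\<in>Y. of_bool (Q {a, b, c})) / n ^ 3"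
    by (simp add: triple_frequency_def n_def power3_eq_cube)
  ultimately show ?thesis
    using abs_distinct_vs_all_triples_ratio_le[of n "6 * N"] sum_all_triples_bounds[OF Y(1), of Q] Y(2)
    by (simp add: n_def N_def)
qed

lemma in_convex_hull_3_iff_cone:
  fixes a b c p :: "'a::real_vector"
  assumes "p \<notin> closed_segment b c"
  shows "p \<in> convex hull {a, b, c} \<longleftrightarrow>
         (\<exists>s t. 0 \<le> s \<and> 0 \<le> t \<and> a = p + s *\<^sub>R (p - b) + t *\<^sub>R (p - c))"
proof
  assume "p \<in> convex hull {a, b, c}"
  then obtain l m n where lmn: "0 \<le> l" "0 \<le> m" "0 \<le> n" "l + m + n = 1"
    and p: "p = l *\<^sub>R a + m *\<^sub>R b + n *\<^sub>R c"
    unfolding convex_hull_3 by blast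
  have l: "l \<noteq> 0"
  proof
    assume "l = 0"
    then have "p = (1 - n) *\<^sub>R b + n *\<^sub>R c" using p lmn(4) by simp
    then show False using assms lmn by (auto simp: closed_segment_def)
  qed
  have la: "l *\<^sub>R (a - p) = m *\<^sub>R (p - b) + n *\<^sub>R (p - c)"
  proof -
    have "l *\<^sub>R a = p - m *\<^sub>R b - n *\<^sub>R c" using p by simp
    moreover have "p = (l + m + n) *\<^sub>R p" using lmn(4) by simp
    ultimately show ?thesis by (simp add: algebra_simps)
  qed
  have "a - p = inverse l *\<^sub>R (l *\<^sub>R (a - p))" using l by simp
  also have "\<dots> = (m / l) *\<^sub>R (p - b) + (n / l) *\<^sub>R (p - c)"
    unfolding la by (simp add: scaleR_right_distrib divide_inverse mult.commute)
  finally have "a - p = (m / l) *\<^sub>R (p - b) + (n / l) *\<^sub>R (p - c)" .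
  then have "a = p + (m / l) *\<^sub>R (p - b) + (n / l) *\<^sub>R (p - c)"
    by (simp add: algebra_simps)
  then show "\<exists>s t. 0 \<le> s \<and> 0 \<le> t \<and> a = p + s *\<^sub>R (p - b) + t *\<^sub>R (p - c)"
    using lmn by (intro exI[of _ "m / l"] exI[of _ "n / l"]) auto
next
  assume "\<exists>s t. 0 \<le> s \<and> 0 \<le> t \<and> a = p + s *\<^sub>R (p - b) + t *\<^sub>R (p - c)"
  then obtain s t where st: "0 \<le> s" "0 \<le> t" and a: "a = p + s *\<^sub>R (p - b) + t *\<^sub>R (p - c)"
    by blast
  define k where "k = 1 + s + t"
  have k: "0 < k" using st by (simp add: k_def)
  have kp: "k *\<^sub>R p = a + s *\<^sub>R b + t *\<^sub>R c"
    using a by (simp add: k_def algebra_simps)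
  have "p = inverse k *\<^sub>R (k *\<^sub>R p)" using k by simp
  also have "\<dots> = (1 / k) *\<^sub>R a + (s / k) *\<^sub>R b + (t / k) *\<^sub>R c"
    unfolding kp by (simp add: scaleR_right_distrib divide_inverse mult.commute)
  finally have "p = (1 / k) *\<^sub>R a + (s / k) *\<^sub>R b + (t / k) *\<^sub>R c" .
  moreover have "1 / k + s / k + t / k = 1"
    using k by (simp add: k_def add_divide_distrib[symmetric])
  moreover have "0 \<le> 1 / k" "0 \<le> s / k" "0 \<le> t / k"
    using st k by simp_all
  ultimately show "p \<in> convex hull {a, b, c}"
    unfolding convex_hull_3 mem_Collect_eq by - (intro exI conjI; assumption)
qed

definition cross2 :: "real^2 \<Rightarrow> real^2 \<Rightarrow> real" where
  "cross2 u v = u$1 * v$2 - u$2 * v$1"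

lemma cross2_add_left: "cross2 (x + y) v = cross2 x v + cross2 y v"
  and cross2_scaleR_left: "cross2 (r *\<^sub>R x) v = r * cross2 x v"
  and cross2_self: "cross2 u u = 0"
  and cross2_antisym: "cross2 u v = - cross2 v u"
  by (simp_all add: cross2_def algebra_simps)

lemma cross2_cramer: "cross2 u v *\<^sub>R x = cross2 x v *\<^sub>R u + cross2 u x *\<^sub>R v"
  by (simp add: vec_eq_iff forall_2 cross2_def algebra_simps)

lemma cross2_eq_0_imp_collinear:
  assumes "cross2 u v = 0"
  shows "collinear {0, u, v}"
proof (cases "u = 0")
  case False
  then obtain i where i: "u$i \<noteq> 0" by (auto simp: vec_eq_iff)
  have "u$i * v$j = v$i * u$j" for j
    using assms exhaust_2[of i] exhaust_2[of j] by (auto simp: cross2_def algebra_simps)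
  then have "v = (v$i / u$i) *\<^sub>R u"
    using i by (simp add: vec_eq_iff field_simps)
  then show ?thesis by (auto simp: collinear_lemma)
qed (simp add: collinear_lemma)

lemma closed_halfplane_cross2:
  assumes "v \<noteq> 0" "k \<noteq> 0"
  shows "closed_halfplane {x. 0 \<le> cross2 (x - p) v / k}"
proof -
  define w :: "real^2" where "w = vector [- v$2 / k, v$1 / k]"
  have "w \<noteq> 0" using assms by (auto simp: w_def vec_eq_iff forall_2)
  moreover have "{x. 0 \<le> cross2 (x - p) v / k} = {x. w \<bullet> x \<le> w \<bullet> p}"
  proof (intro Collect_cong)
    fix x
    have "w \<bullet> x - w \<bullet> p = - (cross2 (x - p) v / k)"
      using assms(2) by (simp add: w_def inner_vec_def sum_2 cross2_def field_simps)
    then show "0 \<le> cross2 (x - p) v / k \<longleftrightarrow> w \<bullet> x \<le> w \<bullet> p" by linarith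
  qed
  ultimately show ?thesis unfolding closed_halfplane_def by blast
qed

lemma cone_eq_inter_halfplanes:
  fixes u v p :: "real^2"
  defines "d \<equiv> cross2 u v"
  assumes "d \<noteq> 0"
  shows "{p + s *\<^sub>R u + t *\<^sub>R v | s t. 0 \<le> s \<and> 0 \<le> t}
        = {x. 0 \<le> cross2 (x - p) v / d} \<inter> {x. 0 \<le> cross2 (x - p) u / (- d)}"
proof (intro set_eqI iffI)
  fix x assume "x \<in> {p + s *\<^sub>R u + t *\<^sub>R v | s t. 0 \<le> s \<and> 0 \<le> t}"
  then obtain s t where "0 \<le> s" "0 \<le> t" "x - p = s *\<^sub>R u + t *\<^sub>R v"
    by (auto simp: algebra_simps)
  moreover from this have "cross2 (x - p) v = s * d" "cross2 (x - p) u = - (t * d)"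
    by (simp_all add: d_def cross2_add_left cross2_scaleR_left cross2_self)
      (simp add: cross2_antisym[of v u])
  ultimately show "x \<in> {x. 0 \<le> cross2 (x - p) v / d} \<inter> {x. 0 \<le> cross2 (x - p) u / (- d)}"
    using assms by simp
next
  fix x assume x: "x \<in> {x. 0 \<le> cross2 (x - p) v / d} \<inter> {x. 0 \<le> cross2 (x - p) u / (- d)}"
  define s where "s = cross2 (x - p) v / d"
  define t where "t = cross2 u (x - p) / d"
  have "0 \<le> s" "0 \<le> t" using x by (simp_all add: s_def t_def cross2_antisym[of u])
  moreover have "x - p = s *\<^sub>R u + t *\<^sub>R v"
  proof -
    have "x - p = inverse d *\<^sub>R (d *\<^sub>R (x - p))" using assms by simp
    also have "\<dots> = s *\<^sub>R u + t *\<^sub>R v"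
      unfolding d_def cross2_cramer[of u v "x - p"]
      by (simp add: s_def t_def d_def scaleR_right_distrib divide_inverse mult.commute)
    finally show ?thesis .
  qed
  moreover from this have "x = p + s *\<^sub>R u + t *\<^sub>R v" by (simp add: algebra_simps)
  ultimately show "x \<in> {p + s *\<^sub>R u + t *\<^sub>R v | s t. 0 \<le> s \<and> 0 \<le> t}"
    by blast
qed

lemma cone_in_wedges:
  fixes u v p :: "real^2"
  assumes "cross2 u v \<noteq> 0"
  shows "{p + s *\<^sub>R u + t *\<^sub>R v | s t. 0 \<le> s \<and> 0 \<le> t} \<in> wedges"
proof -
  have "u \<noteq> 0" "v \<noteq> 0" using assms by (auto simp: cross2_def)
  then have "closed_halfplane {x. 0 \<le> cross2 (x - p) v / cross2 u v}"
    "closed_halfplane {x. 0 \<le> cross2 (x - p) u / (- cross2 u v)}"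
    using assms by (intro closed_halfplane_cross2; simp)+
  then show ?thesis
    unfolding cone_eq_inter_halfplanes[OF assms] wedges_def by blast
qed

lemma triangle_contains_iff_in_wedge:
  fixes p b c :: "real^2"
  assumes nc: "\<not> collinear {p, b, c}"
  obtains R where "R \<in> wedges" "\<And>a. p \<in> convex hull {a, b, c} \<longleftrightarrow> a \<in> R"
proof
  have "p \<notin> closed_segment b c"
  proof
    assume "p \<in> closed_segment b c"
    then have "{p, b, c} \<subseteq> closed_segment b c" by auto
    then show False using nc collinear_closed_segment collinear_subset by blast
  qed
  then show "p \<in> convex hull {a, b, c} \<longleftrightarrow>
      a \<in> {p + s *\<^sub>R (p - b) + t *\<^sub>R (p - c) | s t. 0 \<le> s \<and> 0 \<le> t}" for a
    by (simp add: in_convex_hull_3_iff_cone) blast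
  have "collinear {p, b, c} \<longleftrightarrow> collinear {0, b - p, c - p}"
    using collinear_3[of b p c] by (simp add: insert_commute)
  moreover have "cross2 (p - b) (p - c) = cross2 (b - p) (c - p)"
    by (simp add: cross2_def algebra_simps)
  ultimately have "cross2 (p - b) (p - c) \<noteq> 0"
    using nc cross2_eq_0_imp_collinear by metis
  then show "{p + s *\<^sub>R (p - b) + t *\<^sub>R (p - c) | s t. 0 \<le> s \<and> 0 \<le> t} \<in> wedges"
    by (rule cone_in_wedges)
qed

lemma card_segments_through_point_le_1:
  fixes p b :: "real^2"
  assumes gp: "general_position (insert p X)" and "finite X" "b \<in> X" "b \<noteq> p"
  shows "card {a\<in>X. p \<in> closed_segment a b} \<le> 1"
proof -
  have "a1 = a2" if a1: "a1 \<in> X" "p \<in> closed_segment a1 b" and a2: "a2 \<in> X" "p \<in> closed_segment a2 b"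
    for a1 a2
  proof (rule ccontr)
    assume "a1 \<noteq> a2"
    have "a1 \<noteq> b" "a2 \<noteq> b" using a1(2) a2(2) \<open>b \<noteq> p\<close> by auto
    have "collinear {a, p, b}" if "p \<in> closed_segment a b" for a
    proof (rule collinear_subset[OF collinear_closed_segment])
      show "{a, p, b} \<subseteq> closed_segment a b" using that by simp
    qed
    then have "collinear {a1, b, p}" "collinear {b, p, a2}"
      using a1(2) a2(2) by (simp_all add: insert_commute)
    then have "collinear {a1, b, a2}" using collinear_3_trans \<open>b \<noteq> p\<close> by blast
    then show False
      using gp a1(1) a2(1) \<open>b \<in> X\<close> \<open>a1 \<noteq> a2\<close> \<open>a1 \<noteq> b\<close> \<open>a2 \<noteq> b\<close>
      unfolding general_position_def by blast
  qed
  then show ?thesis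
    unfolding One_nat_def using \<open>finite X\<close> by (subst card_le_Suc0_iff_eq) auto
qed

lemma triangle_fraction_approx:
  fixes p :: "real^2"
  assumes fin: "finite X" and gp: "general_position (insert p X)"
    and approx: "eps_approximation \<epsilon> X A wedges" and "A \<noteq> {}" and inv: "1 / real (card A) \<le> \<epsilon>"
    and "b \<in> X" "c \<in> X"
  shows "\<bar>real (card {a\<in>A. p \<in> convex hull {a, b, c}}) / real (card A)
          - real (card {a\<in>X. p \<in> convex hull {a, b, c}}) / real (card X)\<bar> \<le> \<epsilon>"
proof -
  have AX: "A \<subseteq> X" using approx by (simp add: eps_approximation_def)
  have cardA: "0 < card A" using \<open>A \<noteq> {}\<close> fin AX by (simp add: card_gt_0_iff finite_subset)
  have cardX: "card A \<le> card X" using fin AX by (rule card_mono)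
  have "0 \<le> 1 / real (card A)" by simp
  with inv have "0 \<le> \<epsilon>" by linarith
  consider "b = p \<or> c = p" | "b = c" "b \<noteq> p" | "b \<noteq> c" "b \<noteq> p" "c \<noteq> p" by blast
  then show ?thesis
  proof cases
    case 1
    then have "p \<in> convex hull {a, b, c}" for a by (auto intro: hull_inc)
    then show ?thesis using cardA cardX \<open>0 \<le> \<epsilon>\<close> by simp
  next
    case 2
    define S where "S Y = {a\<in>Y. p \<in> convex hull {a, b, c}}" for Y
    have "card (S X) \<le> 1"
      using card_segments_through_point_le_1[OF gp fin \<open>b \<in> X\<close> \<open>b \<noteq> p\<close>] 2(1)
      by (simp add: S_def segment_convex_hull)
    moreover have "card (S A) \<le> card (S X)" using fin AX by (intro card_mono) (auto simp: S_def)
    ultimately have "real (card (S Y)) / real (card Y) \<le> 1 / real (card A)" if "Y = A \<or> Y = X" for Y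
      using that cardA cardX by (auto intro!: frac_le)
    then have "0 \<le> real (card (S Y)) / real (card Y) \<and> real (card (S Y)) / real (card Y) \<le> \<epsilon>"
      if "Y = A \<or> Y = X" for Y
      using that inv by fastforce
    then show ?thesis unfolding S_def[symmetric] by (smt (verit))
  next
    case 3
    then have "\<not> collinear {p, b, c}"
      using gp \<open>b \<in> X\<close> \<open>c \<in> X\<close> unfolding general_position_def by auto
    then obtain R where R: "R \<in> wedges" "\<And>a. p \<in> convex hull {a, b, c} \<longleftrightarrow> a \<in> R"
      by (rule triangle_contains_iff_in_wedge) blast
    then have "{a\<in>Y. p \<in> convex hull {a, b, c}} = Y \<inter> R" for Y by auto
    then show ?thesis using approx R(1) by (simp add: eps_approximation_def)
  qed
qed

lemma hull_frequency_replace_first: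
  fixes p :: "real^2"
  assumes fin: "finite X" and gp: "general_position (insert p X)"
    and approx: "eps_approximation \<epsilon> X A wedges" and "A \<noteq> {}" and inv: "1 / real (card A) \<le> \<epsilon>"
    and V: "V \<subseteq> X" "V \<noteq> {}" and W: "W \<subseteq> X" "W \<noteq> {}"
  shows "\<bar>triple_frequency (\<lambda>T. p \<in> convex hull T) A V W
          - triple_frequency (\<lambda>T. p \<in> convex hull T) X V W\<bar> \<le> \<epsilon>"
proof -
  have "A \<subseteq> X" using approx by (simp add: eps_approximation_def)
  then show ?thesis
    using fin V W finite_subset[OF \<open>A \<subseteq> X\<close> fin] finite_subset[OF V(1) fin] finite_subset[OF W(1) fin]
    by (intro triple_frequency_replace_first triangle_fraction_approx[OF fin gp approx \<open>A \<noteq> {}\<close> inv])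
      auto
qed

lemma le_sqrt_self: "0 \<le> x \<Longrightarrow> x \<le> 1 \<Longrightarrow> x \<le> sqrt (x :: real)"
  by (intro real_le_rsqrt) (simp add: power2_eq_square mult_left_le)

theorem mainTheorem5:
  shows "\<exists>C::real. \<forall>(\<epsilon>::real) (X::(real^2) set) A (p::real^2).
     0 < \<epsilon> \<and> \<epsilon> \<le> 1 \<and> finite X \<and> general_position X \<and>
     eps_approximation \<epsilon> X A wedges \<and>
     card A \<ge> 3 \<and> real (card A) \<ge> 1 / \<epsilon> \<and>
     general_position (insert p X)
     \<longrightarrow> \<bar>simplicial_depth X p - simplicial_depth A p\<bar> \<le> C * sqrt \<epsilon>"
proof (intro exI[of _ 9] allI impI, elim conjE)
  fix \<epsilon> :: real and X A :: "(real^2) set" and p :: "real^2"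
  assume "0 < \<epsilon>" "\<epsilon> \<le> 1" and fin: "finite X" and approx: "eps_approximation \<epsilon> X A wedges"
    and "card A \<ge> 3" "real (card A) \<ge> 1 / \<epsilon>" and gp: "general_position (insert p X)"
  define F where "F = triple_frequency (\<lambda>T. p \<in> convex hull T)"
  have AX: "A \<subseteq> X" using approx by (simp add: eps_approximation_def)
  have cards: "3 \<le> card A" "card A \<le> card X" using \<open>card A \<ge> 3\<close> card_mono[OF fin AX] by auto
  have invA: "1 / real (card A) \<le> \<epsilon>"
    using \<open>real (card A) \<ge> 1 / \<epsilon>\<close> \<open>0 < \<epsilon>\<close> cards by (simp add: divide_le_eq mult.commute)
  have depth: "\<bar>simplicial_depth Y p - F Y Y Y\<bar> \<le> 3 * \<epsilon>" if "Y \<in> {A, X}" for Y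
  proof -
    have "3 / real (card Y) \<le> 3 / real (card A)" using that cards by (auto simp: frac_le)
    moreover have "finite Y" "3 \<le> card Y" using that fin finite_subset[OF AX fin] cards by auto
    then have "\<bar>simplicial_depth Y p - F Y Y Y\<bar> \<le> 3 / real (card Y)"
      unfolding simplicial_depth_def F_def by (rule card_3_subsets_vs_triple_frequency)
    ultimately show ?thesis using invA by simp
  qed
  have replace: "\<bar>F A V W - F X V W\<bar> \<le> \<epsilon>" if "V \<in> {A, X}" "W \<in> {A, X}" for V W
    using that AX cards unfolding F_def by (intro hull_frequency_replace_first[OF fin gp approx _ invA]) auto
  have "F X A A = F A X A" "F X X A = F A X X"
    unfolding F_def by (rule triple_frequency_swap12, rule triple_frequency_swap13)
  then have "\<bar>simplicial_depth X p - simplicial_depth A p\<bar> \<le> 9 * \<epsilon>"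
    using depth[of A] depth[of X] replace[of A A] replace[of X A] replace[of X X] by auto
  also have "\<dots> \<le> 9 * sqrt \<epsilon>" using \<open>0 < \<epsilon>\<close> \<open>\<epsilon> \<le> 1\<close> le_sqrt_self by simp
  finally show "\<bar>simplicial_depth X p - simplicial_depth A p\<bar> \<le> 9 * sqrt \<epsilon>" .
qed

end
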